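(* Let $\mathcal{X}$ be an input space, $\mathcal{Y}=\{1,\dots,C\}$ a finite label set, and $\mathcal{D}$ a distribution on $\mathcal{X}\times\mathcal{Y}$ with support $\mathrm{supp}(\mathcal{D})$; probabilities and expectations are over $(x,y)\sim\mathcal{D}$. Let $\mathcal{F},\mathcal{G}$ be classification models with differentiable model-dependent losses $\ell_{\mathcal{F}},\ell_{\mathcal{G}}:\mathcal{X}\times\mathcal{Y}\to\mathbb{R}_{\ge0}$ such that $\mathcal{F}(x)=\arg\min_y\ell_{\mathcal{F}}(x,y)$, $\mathcal{G}(x)=\arg\min_y\ell_{\mathcal{G}}(x,y)$. Assume both are $\beta$-smooth with gradient magnitude bounded by $B$: $\|\nabla_x\ell_{\mathcal{F}}(x,y)\|\le B$ and $\|\nabla_x\ell_{\mathcal{G}}(x,y)\|\le B$ for all $x\in\mathcal{X},y\in\mathcal{Y}$. Let $\mathcal{A}_U$ be an $(\alpha,\mathcal{F})$-effective untargeted attack with perturbation ball $\|\delta\|_2\le\epsilon$. Then $$\Pr\big(T_r(\mathcal{F},\mathcal{G},x)=1\big)\le\frac{\xi_{\mathcal{F}}+\xi_{\mathcal{G}}}{\ell_{\min}-\epsilon B\left(1+\sqrt{\frac{1+\overline{\mathcal{S}}(\ell_{\mathcal{F}},\ell_{\mathcal{G}})}{2}}\right)-\beta\epsilon^2},\qquad \ell_{\min}=\min_{\substack{x\in\mathcal{X},y'\in\mathcal{Y}:\\(x,y)\in\mathrm{supp}(\mathcal{D}),\,y'\neq y}}\big(\ell_{\mathcal{F}}(x,y'),\ell_{\mathcal{G}}(x,y')\big),$$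 where $\xi_{\mathcal{F}},\xi_{\mathcal{G}}$ are the empirical risks of $\mathcal{F}$ and $\mathcal{G}$.
   Context: Empirical risk: $\xi_{\mathcal{F}}=\mathbb{E}[\ell_{\mathcal{F}}(x,y)]$ (similarly $\xi_{\mathcal{G}}$). A model $\mathcal{F}$ is $\beta$-smooth if $\sup_{x_1,x_2\in\mathcal{X},y\in\mathcal{Y}}\frac{\|\nabla_x\ell_{\mathcal{F}}(x_1,y)-\nabla_x\ell_{\mathcal{F}}(x_2,y)\|_2}{\|x_1-x_2\|_2}\le\beta$. An untargeted attack maps $x$ (true label $y$) to $\mathcal{A}_U(x)=x+\delta$, $\|\delta\|_2\le\epsilon$; it is $(\alpha,\mathcal{F})$-effective if $\Pr(\mathcal{F}(\mathcal{A}_U(x))\neq y)\ge1-\alpha$. Upper loss gradient similarity: $\overline{\mathcal{S}}(\ell_{\mathcal{F}},\ell_{\mathcal{G}})=\sup_{x\in\mathcal{X},y\in\mathcal{Y}}\frac{\nabla_x\ell_{\mathcal{F}}(x,y)\cdot\nabla_x\ell_{\mathcal{G}}(x,y)}{\|\nabla_x\ell_{\mathcal{F}}(x,y)\|_2\|\nabla_x\ell_{\mathcal{G}}(x,y)\|_2}$. Untargeted transferability: $T_r(\mathcal{F},\mathcal{G},x)=\mathbb{I}[\mathcal{F}(x)=\mathcal{G}(x)=y\ \wedge\ \mathcal{F}(\mathcal{A}_U(x))\neq y\ \wedge\ \mathcal{G}(\mathcal{A}_U(x))\neq y]$. *)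

theory Defs
  imports "HOL-Probability.Probability"
begin

definition in_supp :: "('a::metric_space \<times> 'c) measure \<Rightarrow> 'a \<Rightarrow> 'c \<Rightarrow> bool" where
  "in_supp D x y \<longleftrightarrow> (\<forall>e>0. measure D (ball x e \<times> {y}) > 0)"

definition beta_smooth :: "real \<Rightarrow> ('a::real_normed_vector \<Rightarrow> 'c \<Rightarrow> 'a) \<Rightarrow> bool" where
  "beta_smooth \<beta> g \<longleftrightarrow> (\<forall>x1 x2 y. norm (g x1 y - g x2 y) \<le> \<beta> * norm (x1 - x2))"

text \<open>Upper loss gradient similarity (gF, gG are the input gradients of the losses).\<close>
definition upper_grad_sim :: "('a::real_inner \<Rightarrow> 'c \<Rightarrow> 'a) \<Rightarrow> ('a \<Rightarrow> 'c \<Rightarrow> 'a) \<Rightarrow> real" where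
  "upper_grad_sim gF gG =
     (SUP p\<in>UNIV. (gF (fst p) (snd p) \<bullet> gG (fst p) (snd p)) /
                  (norm (gF (fst p) (snd p)) * norm (gG (fst p) (snd p))))"

definition l_min :: "('a::metric_space \<times> 'c) measure \<Rightarrow> ('a \<Rightarrow> 'c \<Rightarrow> real) \<Rightarrow> ('a \<Rightarrow> 'c \<Rightarrow> real) \<Rightarrow> real" where
  "l_min D lF lG = Inf ({lF x y' | x y y'. in_supp D x y \<and> y' \<noteq> y} \<union>
                        {lG x y' | x y y'. in_supp D x y \<and> y' \<noteq> y})"

definition transfer :: "('a \<Rightarrow> 'c) \<Rightarrow> ('a \<Rightarrow> 'c) \<Rightarrow> ('a \<Rightarrow> 'c \<Rightarrow> 'a) \<Rightarrow> 'a \<Rightarrow> 'c \<Rightarrow> bool" where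
  "transfer F G A x y \<longleftrightarrow> F x = y \<and> G x = y \<and> F (A x y) \<noteq> y \<and> G (A x y) \<noteq> y"

end

theory Submission
  imports Defs
begin

(* At a support point (x, y) where the attack transfers, put \<delta> = A x y - x. Since F misclassifies
   x + \<delta> as some y' \<noteq> y, the loss of F at y' is at least l_min at x and at most the loss at y at
   x + \<delta>; the gradient bound B and the descent lemma for the \<beta>-smooth loss then give
   lF x y \<ge> l_min - \<epsilon> B - \<beta> \<epsilon>^2 - \<delta> \<bullet> \<nabla>lF, and likewise for G. As the two gradients have cosine
   at most upper_grad_sim, the sum of their normalisations has length at most
   2 sqrt ((1 + upper_grad_sim) / 2), so \<delta> cannot correlate with both by more than
   \<epsilon> B sqrt ((1 + upper_grad_sim) / 2). Hence lF + lG is at least the denominator almost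
   everywhere on the transfer event (the support has full measure), and Markov's inequality
   concludes. *)

lemma onorm_inner_left_le_norm:
  fixes v :: "'a::real_inner"
  shows "onorm (\<lambda>k. k \<bullet> v) \<le> norm v"
  by (rule onorm_bound) (simp_all add: Cauchy_Schwarz_ineq2 mult.commute)

lemma gderiv_bounded_imp_lipschitz:
  fixes l :: "'a::real_inner \<Rightarrow> real"
  assumes grad: "\<And>x. GDERIV l x :> g x" and bound: "\<And>x. norm (g x) \<le> B"
  shows "\<bar>l x' - l x\<bar> \<le> B * norm (x' - x)"
proof -
  have "norm (l x' - l x) \<le> B * norm (x' - x)"
  proof (rule differentiable_bound[where S = UNIV and f' = "\<lambda>z k. k \<bullet> g z"])
    fix z
    show "(l has_derivative (\<lambda>k. k \<bullet> g z)) (at z within UNIV)"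
      using grad[of z] by (simp add: gderiv_def)
    show "onorm (\<lambda>k. k \<bullet> g z) \<le> B"
      using onorm_inner_left_le_norm bound order_trans by blast
  qed auto
  then show ?thesis by simp
qed

lemma gderiv_lipschitz_imp_quadratic_upper_bound:
  fixes l :: "'a::real_inner \<Rightarrow> real"
  assumes grad: "\<And>x. GDERIV l x :> g x"
    and lipschitz: "\<And>x1 x2. norm (g x1 - g x2) \<le> \<beta> * norm (x1 - x2)" and "\<beta> \<ge> 0"
  shows "l x' \<le> l x + (x' - x) \<bullet> g x + \<beta> * (norm (x' - x))\<^sup>2"
proof -
  define r where "r = norm (x' - x)"
  have "norm (l x' - l x - (x' - x) \<bullet> g x) \<le> norm (x' - x) * (\<beta> * r)"
  proof (rule differentiable_bound_linearization[where S = "cball x r" and f' = "\<lambda>z k. k \<bullet> g z" and ?x0.0 = x])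
    fix t :: real assume "t \<in> {0..1}"
    then show "x + t *\<^sub>R (x' - x) \<in> cball x r"
      by (simp add: r_def dist_norm mult_left_le_one_le)
  next
    fix z assume z: "z \<in> cball x r"
    show "(l has_derivative (\<lambda>k. k \<bullet> g z)) (at z within cball x r)"
      using grad[of z] unfolding gderiv_def by (rule has_derivative_at_withinI)
    have "onorm (\<lambda>k. k \<bullet> (g z - g x)) \<le> norm (g z - g x)"
      by (rule onorm_inner_left_le_norm)
    also have "\<dots> \<le> \<beta> * norm (z - x)"
      by (rule lipschitz)
    also have "\<dots> \<le> \<beta> * r"
      using z \<open>\<beta> \<ge> 0\<close> by (simp add: dist_norm norm_minus_commute mult_left_mono)
    finally show "onorm ((\<lambda>k. k \<bullet> g z) - (\<lambda>k. k \<bullet> g x)) \<le> \<beta> * r"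
      by (simp add: fun_diff_def inner_diff_right)
  qed (simp add: r_def)
  then have "l x' - l x - (x' - x) \<bullet> g x \<le> \<beta> * r\<^sup>2"
    by (simp add: r_def power2_eq_square abs_le_iff mult.left_commute)
  then show ?thesis
    by (simp add: r_def)
qed

lemma abs_cosine_le_1:
  fixes a b :: "'a::real_inner"
  shows "\<bar>(a \<bullet> b) / (norm a * norm b)\<bar> \<le> 1"
  by (cases "a = 0 \<or> b = 0") (auto simp: abs_divide Cauchy_Schwarz_ineq2)

lemma norm_sgn_add_sgn_squared:
  fixes a b :: "'a::real_inner"
  assumes "a \<noteq> 0" "b \<noteq> 0"
  shows "(norm (sgn a + sgn b))\<^sup>2 = 2 * (1 + (a \<bullet> b) / (norm a * norm b))"
proof -
  have "sgn a \<bullet> sgn a = 1" "sgn b \<bullet> sgn b = 1" "sgn a \<bullet> sgn b = (a \<bullet> b) / (norm a * norm b)"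
    using assms by (simp_all add: sgn_div_norm field_simps flip: power2_norm_eq_inner)
  then show ?thesis
    by (simp add: power2_norm_eq_inner inner_add_left inner_add_right inner_commute)
qed

lemma min_inner_le_cosine_bound:
  fixes a b d :: "'a::real_inner"
  assumes norm_a: "norm a \<le> B" and norm_b: "norm b \<le> B" and norm_d: "norm d \<le> \<epsilon>"
    and cosine: "(a \<bullet> b) / (norm a * norm b) \<le> S"
  shows "min (d \<bullet> a) (d \<bullet> b) \<le> \<epsilon> * B * sqrt ((1 + S) / 2)"
proof (rule ccontr)
  define s where "s = sqrt ((1 + S) / 2)"
  assume "\<not> min (d \<bullet> a) (d \<bullet> b) \<le> \<epsilon> * B * sqrt ((1 + S) / 2)"
  then have da: "d \<bullet> a > \<epsilon> * B * s" and db: "d \<bullet> b > \<epsilon> * B * s"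
    by (simp_all add: s_def)
  have "S \<ge> -1"
    using abs_cosine_le_1[of a b] cosine by linarith
  then have s: "s \<ge> 0" "(2 * s)\<^sup>2 = 2 * (1 + S)"
    by (simp_all add: s_def power_mult_distrib)
  have "\<epsilon> \<ge> 0" "B \<ge> 0"
    using norm_d norm_a norm_ge_zero order_trans by blast+
  with s have bound_nonneg: "\<epsilon> * B * s \<ge> 0"
    by simp
  with da db have "d \<bullet> a > 0" "d \<bullet> b > 0"
    by linarith+
  then have "a \<noteq> 0" "b \<noteq> 0" "d \<noteq> 0"
    by auto
  then have "B > 0"
    using norm_a by (metis order_less_le_trans zero_less_norm_iff)
  have sgn_bound: "norm d * s < d \<bullet> sgn v"
    if "norm v \<le> B" "v \<noteq> 0" "d \<bullet> v > \<epsilon> * B * s" for v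
  proof -
    have "norm d * s \<le> \<epsilon> * s"
      using norm_d s by (simp add: mult_right_mono)
    also have "\<dots> < (d \<bullet> v) / B"
      using that \<open>B > 0\<close> by (simp add: field_simps)
    also have "\<dots> \<le> (d \<bullet> v) / norm v"
      using that bound_nonneg \<open>B > 0\<close> by (intro divide_left_mono) auto
    finally show ?thesis
      by (simp add: sgn_div_norm divide_inverse mult.commute)
  qed
  have "norm d * (2 * s) < d \<bullet> (sgn a + sgn b)"
    using sgn_bound[OF norm_a \<open>a \<noteq> 0\<close> da] sgn_bound[OF norm_b \<open>b \<noteq> 0\<close> db]
    by (simp add: inner_add_right)
  also have "\<dots> \<le> norm d * norm (sgn a + sgn b)"
    by (rule norm_cauchy_schwarz)
  finally have "2 * s < norm (sgn a + sgn b)"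
    using \<open>d \<noteq> 0\<close> by simp
  then have "(2 * s)\<^sup>2 < (norm (sgn a + sgn b))\<^sup>2"
    using s by (intro power_strict_mono) auto
  moreover have "(norm (sgn a + sgn b))\<^sup>2 \<le> (2 * s)\<^sup>2"
    unfolding norm_sgn_add_sgn_squared[OF \<open>a \<noteq> 0\<close> \<open>b \<noteq> 0\<close>] s(2) using cosine by simp
  ultimately show False
    by linarith
qed

lemma not_in_supp_null_sets:
  fixes M :: "('a::{metric_space, second_countable_topology} \<times> 'c) measure"
  assumes "finite_measure M" and sets_M: "sets M = sets (borel \<Otimes>\<^sub>M count_space UNIV)"
  shows "{x. \<not> in_supp M x y} \<times> {y} \<in> null_sets M"
proof -
  interpret finite_measure M by fact
  have ball_sets: "ball x e \<times> {y} \<in> sets M" for x e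
    unfolding sets_M by (intro pair_measureI) auto
  define \<F> where "\<F> = {ball x e | x e. e > 0 \<and> ball x e \<times> {y} \<in> null_sets M}"
  have not_in_supp_iff: "\<not> in_supp M x y \<longleftrightarrow> (\<exists>e>0. ball x e \<times> {y} \<in> null_sets M)" for x
    using ball_sets by (auto simp: in_supp_def null_sets_def emeasure_eq_measure not_less
                               intro: antisym[OF _ measure_nonneg])
  have "\<Union>\<F> = {x. \<not> in_supp M x y}"
  proof (intro equalityI subsetI)
    fix z assume "z \<in> \<Union>\<F>"
    then obtain x e where null: "ball x e \<times> {y} \<in> null_sets M" and z: "z \<in> ball x e"
      unfolding \<F>_def by auto
    obtain r where "r > 0" "ball z r \<subseteq> ball x e"
      using open_ball z by (rule openE)
    then have "ball z r \<times> {y} \<in> null_sets M"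
      using null ball_sets by (blast intro: null_sets_subset)
    then show "z \<in> {x. \<not> in_supp M x y}"
      using \<open>r > 0\<close> not_in_supp_iff by auto
  next
    fix z assume "z \<in> {x. \<not> in_supp M x y}"
    then obtain e where "e > 0" "ball z e \<times> {y} \<in> null_sets M"
      using not_in_supp_iff by auto
    then show "z \<in> \<Union>\<F>"
      unfolding \<F>_def by (intro UnionI[of "ball z e"]) auto
  qed
  moreover obtain \<F>' where "\<F>' \<subseteq> \<F>" "countable \<F>'" "\<Union>\<F>' = \<Union>\<F>"
    using Lindelof[of \<F>] unfolding \<F>_def by blast
  moreover have "(\<Union>U\<in>\<F>'. U \<times> {y}) \<in> null_sets M"
    using \<open>\<F>' \<subseteq> \<F>\<close> \<open>countable \<F>'\<close> by (intro null_sets_UN') (auto simp: \<F>_def)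
  ultimately show ?thesis
    by (metis Sigma_Union)
qed

lemma AE_in_supp:
  fixes M :: "('a::{metric_space, second_countable_topology} \<times> 'c::countable) measure"
  assumes "finite_measure M" and "sets M = sets (borel \<Otimes>\<^sub>M count_space UNIV)"
  shows "AE p in M. in_supp M (fst p) (snd p)"
proof (rule AE_I')
  show "(\<Union>y. {x. \<not> in_supp M x y} \<times> {y}) \<in> null_sets M"
    using not_in_supp_null_sets[OF assms] by (intro null_sets_UN') auto
qed auto

lemma integral_Markov_inequality_measure_AE_imp:
  fixes f :: "'a \<Rightarrow> real"
  assumes "finite_measure M" and int_f: "integrable M f" and "AE x in M. 0 \<le> f x" and "c > 0"
    and event: "AE x in M. P x \<longrightarrow> c \<le> f x"
  shows "measure M {x \<in> space M. P x} \<le> (\<integral>x. f x \<partial>M) / c"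
proof -
  interpret finite_measure M by fact
  have "measure M {x \<in> space M. P x} \<le> measure M {x \<in> space M. c \<le> f x}"
  proof (rule finite_measure_mono_AE)
    show "AE x in M. x \<in> {x \<in> space M. P x} \<longrightarrow> x \<in> {x \<in> space M. c \<le> f x}"
      using event by eventually_elim auto
    show "{x \<in> space M. c \<le> f x} \<in> sets M"
      using borel_measurable_integrable[OF int_f] by (intro borel_measurable_le) auto
  qed
  also have "\<dots> \<le> (\<integral>x. f x \<partial>M) / c"
    using assms by (intro integral_Markov_inequality_measure[where A = "space M"]) auto
  finally show ?thesis .
qed

lemma beta_smooth_nonneg:
  fixes g :: "'a::{real_normed_vector, perfect_space} \<Rightarrow> 'c \<Rightarrow> 'a"
  assumes "beta_smooth \<beta> g"
  shows "\<beta> \<ge> 0"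
proof -
  obtain x :: 'a where "norm x = 1"
    using vector_choose_size zero_le_one by blast
  then show ?thesis
    using assms norm_ge_zero[of "g x undefined - g 0 undefined"]
    unfolding beta_smooth_def by (metis diff_zero mult.right_neutral order_trans)
qed

lemma l_min_le:
  assumes "\<And>x y. lF x y \<ge> 0" "\<And>x y. lG x y \<ge> 0" "in_supp D x y" "y' \<noteq> y"
  shows "l_min D lF lG \<le> lF x y'" "l_min D lF lG \<le> lG x y'"
proof -
  let ?X = "{lF x y' | x y y'. in_supp D x y \<and> y' \<noteq> y} \<union> {lG x y' | x y y'. in_supp D x y \<and> y' \<noteq> y}"
  have "bdd_below ?X"
    using assms(1,2) by (intro bdd_belowI[of _ 0]) auto
  moreover have "lF x y' \<in> ?X" and "lG x y' \<in> ?X"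
    using assms(3,4) by blast+
  ultimately show "l_min D lF lG \<le> lF x y'" and "l_min D lF lG \<le> lG x y'"
    unfolding l_min_def by (meson cInf_lower)+
qed

lemma cosine_le_upper_grad_sim:
  "(gF x y \<bullet> gG x y) / (norm (gF x y) * norm (gG x y)) \<le> upper_grad_sim gF gG"
  unfolding upper_grad_sim_def
  by (rule cSUP_upper2[where x = "(x, y)"]) (auto intro: bdd_aboveI2 abs_le_D1[OF abs_cosine_le_1])

lemma misclassified_perturbation_imp_loss_ge:
  fixes l :: "'a::real_inner \<Rightarrow> 'c \<Rightarrow> real" and M :: "'a \<Rightarrow> 'c"
  assumes grad: "\<And>x y. GDERIV (\<lambda>z. l z y) x :> g x y"
    and bound: "\<And>x y. norm (g x y) \<le> B"
    and smooth: "beta_smooth \<beta> g" and "\<beta> \<ge> 0"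
    and argmin: "\<And>x y. l x (M x) \<le> l x y"
    and wrong_labels_ge: "\<And>y'. y' \<noteq> y \<Longrightarrow> L \<le> l x y'"
    and misclassified: "M x' \<noteq> y" and perturbation: "norm (x' - x) \<le> \<epsilon>"
  shows "L - \<epsilon> * B - \<beta> * \<epsilon>\<^sup>2 - (x' - x) \<bullet> g x y \<le> l x y"
proof -
  let ?y' = "M x'"
  have "B \<ge> 0"
    using bound norm_ge_zero order_trans by blast
  have "L \<le> l x ?y'"
    using wrong_labels_ge misclassified .
  also have "l x ?y' \<le> l x' ?y' + \<epsilon> * B"
  proof -
    have "\<bar>l x' ?y' - l x ?y'\<bar> \<le> B * norm (x' - x)"
      by (rule gderiv_bounded_imp_lipschitz[where g = "\<lambda>z. g z ?y'"]) (use grad bound in auto)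
    moreover have "B * norm (x' - x) \<le> \<epsilon> * B"
      using perturbation \<open>B \<ge> 0\<close> by (simp add: mult.commute mult_left_mono)
    ultimately show ?thesis
      by linarith
  qed
  also have "l x' ?y' \<le> l x' y"
    by (rule argmin)
  also have "l x' y \<le> l x y + (x' - x) \<bullet> g x y + \<beta> * (norm (x' - x))\<^sup>2"
    by (rule gderiv_lipschitz_imp_quadratic_upper_bound[where g = "\<lambda>z. g z y"])
       (use grad smooth \<open>\<beta> \<ge> 0\<close> in \<open>auto simp: beta_smooth_def\<close>)
  also have "\<beta> * (norm (x' - x))\<^sup>2 \<le> \<beta> * \<epsilon>\<^sup>2"
    using perturbation \<open>\<beta> \<ge> 0\<close> by (intro mult_left_mono power_mono) auto
  finally show ?thesis
    by simp
qed

lemma joint_misclassification_imp_loss_sum_ge: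
  fixes lF lG :: "'a::real_inner \<Rightarrow> 'c \<Rightarrow> real" and F G :: "'a \<Rightarrow> 'c"
  assumes nonneg: "lF x y \<ge> 0" "lG x y \<ge> 0"
    and gradF: "\<And>x y. GDERIV (\<lambda>z. lF z y) x :> gF x y"
    and gradG: "\<And>x y. GDERIV (\<lambda>z. lG z y) x :> gG x y"
    and F_argmin: "\<And>x y. lF x (F x) \<le> lF x y"
    and G_argmin: "\<And>x y. lG x (G x) \<le> lG x y"
    and smoothF: "beta_smooth \<beta> gF" and smoothG: "beta_smooth \<beta> gG" and "\<beta> \<ge> 0"
    and boundF: "\<And>x y. norm (gF x y) \<le> B"
    and boundG: "\<And>x y. norm (gG x y) \<le> B"
    and wrong_labels_ge: "\<And>y'. y' \<noteq> y \<Longrightarrow> L \<le> lF x y' \<and> L \<le> lG x y'"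
    and cosine: "(gF x y \<bullet> gG x y) / (norm (gF x y) * norm (gG x y)) \<le> S"
    and misclassified: "F x' \<noteq> y" "G x' \<noteq> y" and perturbation: "norm (x' - x) \<le> \<epsilon>"
  shows "L - \<epsilon> * B * (1 + sqrt ((1 + S) / 2)) - \<beta> * \<epsilon>\<^sup>2 \<le> lF x y + lG x y"
proof -
  let ?\<delta> = "x' - x"
  have "L - \<epsilon> * B - \<beta> * \<epsilon>\<^sup>2 - ?\<delta> \<bullet> gF x y \<le> lF x y"
    using gradF boundF smoothF \<open>\<beta> \<ge> 0\<close> F_argmin _ misclassified(1) perturbation
    by (rule misclassified_perturbation_imp_loss_ge) (use wrong_labels_ge in blast)
  moreover have "L - \<epsilon> * B - \<beta> * \<epsilon>\<^sup>2 - ?\<delta> \<bullet> gG x y \<le> lG x y"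
    using gradG boundG smoothG \<open>\<beta> \<ge> 0\<close> G_argmin _ misclassified(2) perturbation
    by (rule misclassified_perturbation_imp_loss_ge) (use wrong_labels_ge in blast)
  moreover have "min (?\<delta> \<bullet> gF x y) (?\<delta> \<bullet> gG x y) \<le> \<epsilon> * B * sqrt ((1 + S) / 2)"
    using boundF boundG perturbation cosine by (rule min_inner_le_cosine_bound)
  ultimately show ?thesis
    using nonneg unfolding min_le_iff_disj distrib_left by auto
qed

theorem theorem4:
  fixes D :: "('a::euclidean_space \<times> 'c::finite) measure"
    and lF lG :: "'a \<Rightarrow> 'c \<Rightarrow> real"
    and gF gG :: "'a \<Rightarrow> 'c \<Rightarrow> 'a"
    and F G :: "'a \<Rightarrow> 'c"
    and A :: "'a \<Rightarrow> 'c \<Rightarrow> 'a"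
    and \<alpha> \<beta> B \<epsilon> :: real
  assumes D: "prob_space D"
    and sets_D: "sets D = sets (borel \<Otimes>\<^sub>M count_space UNIV)"
    and nonnegF: "\<And>x y. lF x y \<ge> 0"
    and nonnegG: "\<And>x y. lG x y \<ge> 0"
    and gradF: "\<And>x y. GDERIV (\<lambda>z. lF z y) x :> gF x y"
    and gradG: "\<And>x y. GDERIV (\<lambda>z. lG z y) x :> gG x y"
    and F_argmin: "\<And>x y. lF x (F x) \<le> lF x y"
    and G_argmin: "\<And>x y. lG x (G x) \<le> lG x y"
    and F_meas: "F \<in> borel \<rightarrow>\<^sub>M count_space UNIV"
    and G_meas: "G \<in> borel \<rightarrow>\<^sub>M count_space UNIV"
    and intF: "integrable D (\<lambda>(x, y). lF x y)"
    and intG: "integrable D (\<lambda>(x, y). lG x y)"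
    and smoothF: "beta_smooth \<beta> gF"
    and smoothG: "beta_smooth \<beta> gG"
    and boundF: "\<And>x y. norm (gF x y) \<le> B"
    and boundG: "\<And>x y. norm (gG x y) \<le> B"
    and A_meas: "(\<lambda>(x, y). A x y) \<in> D \<rightarrow>\<^sub>M borel"
    and A_ball: "\<And>x y. norm (A x y - x) \<le> \<epsilon>"
    and A_eff: "measure D {(x, y) \<in> space D. F (A x y) \<noteq> y} \<ge> 1 - \<alpha>"
    and denom_pos: "l_min D lF lG - \<epsilon> * B * (1 + sqrt ((1 + upper_grad_sim gF gG) / 2))
                      - \<beta> * \<epsilon>\<^sup>2 > 0"
  shows "measure D {(x, y) \<in> space D. transfer F G A x y}
         \<le> ((\<integral>p. lF (fst p) (snd p) \<partial>D) + (\<integral>p. lG (fst p) (snd p) \<partial>D)) /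
           (l_min D lF lG - \<epsilon> * B * (1 + sqrt ((1 + upper_grad_sim gF gG) / 2))
              - \<beta> * \<epsilon>\<^sup>2)"
proof -
  interpret prob_space D by (rule D)
  let ?d = "l_min D lF lG - \<epsilon> * B * (1 + sqrt ((1 + upper_grad_sim gF gG) / 2)) - \<beta> * \<epsilon>\<^sup>2"
  have "\<beta> \<ge> 0"
    using smoothF by (rule beta_smooth_nonneg)
  have loss_sum_ge: "?d \<le> lF x y + lG x y" if "in_supp D x y" "transfer F G A x y" for x y
  proof (rule joint_misclassification_imp_loss_sum_ge[where F = F and G = G and x' = "A x y"])
    show "l_min D lF lG \<le> lF x y' \<and> l_min D lF lG \<le> lG x y'" if "y' \<noteq> y" for y'
      using l_min_le[where lF = lF and lG = lG, OF nonnegF nonnegG \<open>in_supp D x y\<close> that] by blast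
    show "F (A x y) \<noteq> y" "G (A x y) \<noteq> y"
      using \<open>transfer F G A x y\<close> by (simp_all add: transfer_def)
  qed (rule nonnegF nonnegG gradF gradG F_argmin G_argmin smoothF smoothG \<open>\<beta> \<ge> 0\<close> boundF boundG
        cosine_le_upper_grad_sim A_ball)+
  have "AE p in D. transfer F G A (fst p) (snd p) \<longrightarrow> ?d \<le> lF (fst p) (snd p) + lG (fst p) (snd p)"
    using AE_in_supp[OF finite_measure_axioms sets_D] by eventually_elim (use loss_sum_ge in auto)
  then have "measure D {p \<in> space D. transfer F G A (fst p) (snd p)}
      \<le> (\<integral>p. lF (fst p) (snd p) + lG (fst p) (snd p) \<partial>D) / ?d"
    using intF intG nonnegF nonnegG denom_pos
    by (intro integral_Markov_inequality_measure_AE_imp) (auto simp: case_prod_beta' add_nonneg_nonneg)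
  also have "(\<integral>p. lF (fst p) (snd p) + lG (fst p) (snd p) \<partial>D)
      = (\<integral>p. lF (fst p) (snd p) \<partial>D) + (\<integral>p. lG (fst p) (snd p) \<partial>D)"
    using intF intG by (intro Bochner_Integration.integral_add) (simp_all add: case_prod_beta')
  finally show ?thesis
    by (simp add: case_prod_beta')
qed

end
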